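(* Let $w,z\in A^+$ and let $z_0\in L$ be the first coordinate of $z$ and $w_m\in L$ be the last coordinate of $w$ determined by $L$ (i.e. the first entry of $\mathrm{sc}_L[z]$ and the last entry of $\mathrm{sc}_L[w]$). Then, (a) $\hat{\mathsf f}(wz)=\hat{\mathsf f}(wz_0){\mathsf f}(z_0)^{-1}\hat{\mathsf f}(z)=\hat{\mathsf f}(w){\mathsf f}(w_m)^{-1}\hat{\mathsf f}(w_mz)$; (b) $\check{\mathsf f}(wz)=\check{\mathsf f}(\check{\mathsf f}(w)\check{\mathsf f}(z))$.
   Context: Let $A$ be an alphabet, $A^+$ the free semigroup and $A^*$ the free monoid on $A$. For a word $w=a_1\cdots a_n$ ($a_i\in A$), $w[p,q]=a_p\cdots a_q$, $w_\alpha=w[1,n-1]$ and $w_\omega=w[2,n]$. Let $L\subseteq A^+$ be a non-empty factorial language (closed under non-empty factors) with $A\subseteq L$, and $\ddot L=\{v\in A^+: v\notin L,\ v_\alpha,v_\omega\in L\}$. For $w\in A^+$, the sequence of coordinates $\mathrm{sc}_L[w]=(w_0,\ddot w_1,w_1,\ldots,\ddot w_m,w_m)$ is defined as follows: $m\ge 0$ is the number of occurrences of elements of $\ddot L$ in $w$ (so $m=0$ iff $w\in L$, in which case $\mathrm{sc}_L[w]=(w)$); if $m>0$, $\ddot w_i=w[p_i,q_i]$ ($i=1,\dots,m$) are the successive occurrences of factors of $w$ in $\ddot L$, $w_0=w[1,q_1-1]$, $w_m=w[p_m+1,n]$ and $w_i=w[p_i+1,q_{i+1}-1]$ for $0<i<m$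 (these are the maximal factors of $w$ lying in $L$, in order). Let $G$ be a group with semigroup presentation $\langle A_G\mid R_G\rangle$; words of $A_G^+$ are identified with the elements of $G$ they represent, and by choosing a representative word for each element, $G$ is viewed as a subset of $A_G^+$. Let $X=A\cup A_G$, $L^1=L\cup\{1\}$, and let ${\mathsf f}:L\cup\ddot L\to G$ be a function. Define $\acute{\mathsf f}(1)=\grave{\mathsf f}(1)=1$, $\hat{\mathsf f}(1)=1_G$; for $w\in L$: $\check{\mathsf f}(w)=\acute{\mathsf f}(w)=\grave{\mathsf f}(w)=w$ and $\hat{\mathsf f}(w)={\mathsf f}(w)$; for $w\in A^+\setminus L$ with $\mathrm{sc}_L[w]=(w_0,\ddot w_1,w_1,\ldots,\ddot w_m,w_m)$: $\check{\mathsf f}(w)=w_0{\mathsf f}(\ddot w_1){\mathsf f}(w_1){\mathsf f}(\ddot w_2)\cdots{\mathsf f}(\ddot w_m)w_m$, $\acute{\mathsf f}(w)={\mathsf f}(w_0){\mathsf f}(\ddot w_1){\mathsf f}(w_1)\cdots{\mathsf f}(\ddot w_m)w_m$, $\grave{\mathsf f}(w)=w_0{\mathsf f}(\ddot w_1){\mathsf f}(w_1)\cdots{\mathsf f}(\ddot w_m){\mathsf f}(w_m)$, $\hat{\mathsf f}(w)={\mathsf f}(w_0){\mathsf f}(\ddot w_1){\mathsf f}(w_1)\cdots{\mathsf f}(\ddot w_m){\mathsf f}(w_m)$ (a product in $G$). Then $\check{\mathsf f}$ is extended to $X^+\to L\cup L^1GL^1$ by setting, for $w=u_0g_1u_1\cdots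 g_nu_n\in X^+\setminus A^+$ with $u_0,u_n\in A^*$, $u_1,\ldots,u_{n-1}\in A^+$, $g_1,\ldots,g_n\in A_G^+$: $\check{\mathsf f}(w)=\grave{\mathsf f}(u_0)g_1\hat{\mathsf f}(u_1)\cdots g_{n-1}\hat{\mathsf f}(u_{n-1})g_n\acute{\mathsf f}(u_n)$ (products of consecutive group elements computed in $G$). In (b), $\check{\mathsf f}(w)\check{\mathsf f}(z)$ is a word in $X^+$ and the outer $\check{\mathsf f}$ is this extension. *)

theory Defs
  imports "HOL-Algebra.Group" "HOL-Library.Product_Lexorder"
begin

text \<open>Words over the alphabet A are lists over the type 'a (A = UNIV :: 'a set);
  A^+ = non-empty lists. Positions are 0-indexed.\<close>

definition factorial_lang :: "'a list set \<Rightarrow> bool" where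
  "factorial_lang L \<longleftrightarrow> (\<forall>v\<in>L. \<forall>x u y. v = x @ u @ y \<and> u \<noteq> [] \<longrightarrow> u \<in> L)"

definition ddot :: "'a list set \<Rightarrow> 'a list set" where
  "ddot L = {v. v \<noteq> [] \<and> v \<notin> L \<and> butlast v \<in> L \<and> tl v \<in> L}"

text \<open>The factor w[p,q] (0-indexed, inclusive).\<close>
definition fac :: "'a list \<Rightarrow> nat \<Rightarrow> nat \<Rightarrow> 'a list" where
  "fac w p q = take (Suc q - p) (drop p w)"

definition occs :: "'a list set \<Rightarrow> 'a list \<Rightarrow> (nat \<times> nat) list" where
  "occs L w = sorted_list_of_set {(p, q). p \<le> q \<and> q < length w \<and> fac w p q \<in> ddot L}"

text \<open>The L-coordinates w_0, ..., w_m: w_0 = w[0,q_1-1], w_i = w[p_i+1, q_(i+1)-1], w_m = w[p_m+1, end].\<close>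
definition lcoords :: "'a list set \<Rightarrow> 'a list \<Rightarrow> 'a list list" where
  "lcoords L w =
     (let os = occs L w;
          starts = 0 # map (\<lambda>(p, q). Suc p) os;
          ends = map snd os @ [length w]
      in map2 (\<lambda>s e. take (e - s) (drop s w)) starts ends)"

definition ddcoords :: "'a list set \<Rightarrow> 'a list \<Rightarrow> 'a list list" where
  "ddcoords L w = map (\<lambda>(p, q). fac w p q) (occs L w)"

text \<open>sc_L[w] = (w_0, ddot w_1, w_1, ..., ddot w_m, w_m).\<close>
definition sc :: "'a list set \<Rightarrow> 'a list \<Rightarrow> 'a list list" where
  "sc L w = hd (lcoords L w) # concat (map2 (\<lambda>d c. [d, c]) (ddcoords L w) (tl (lcoords L w)))"

definition gprod :: "('g, 'b) monoid_scheme \<Rightarrow> 'g list \<Rightarrow> 'g" where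
  "gprod G xs = foldr (\<lambda>x y. x \<otimes>\<^bsub>G\<^esub> y) xs \<one>\<^bsub>G\<^esub>"

text \<open>Words over X = A \<union> A_G are lists of type ('a + 'g) list; a group letter Inr g stands for
  (the representative word of) the group element g.\<close>

definition fhat :: "('g, 'b) monoid_scheme \<Rightarrow> 'a list set \<Rightarrow> ('a list \<Rightarrow> 'g) \<Rightarrow> 'a list \<Rightarrow> 'g" where
  "fhat G L f w = (if w = [] then \<one>\<^bsub>G\<^esub> else if w \<in> L then f w
                   else gprod G (map f (sc L w)))"

definition fcheckA :: "('g, 'b) monoid_scheme \<Rightarrow> 'a list set \<Rightarrow> ('a list \<Rightarrow> 'g) \<Rightarrow> 'a list \<Rightarrow> ('a + 'g) list" where
  "fcheckA G L f w = (if w = [] \<or> w \<in> L then map Inl w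
     else map Inl (hd (sc L w)) @ [Inr (gprod G (map f (butlast (tl (sc L w)))))] @ map Inl (last (sc L w)))"

definition facute :: "('g, 'b) monoid_scheme \<Rightarrow> 'a list set \<Rightarrow> ('a list \<Rightarrow> 'g) \<Rightarrow> 'a list \<Rightarrow> ('a + 'g) list" where
  "facute G L f w = (if w = [] \<or> w \<in> L then map Inl w
     else [Inr (gprod G (map f (butlast (sc L w))))] @ map Inl (last (sc L w)))"

definition fgrave :: "('g, 'b) monoid_scheme \<Rightarrow> 'a list set \<Rightarrow> ('a list \<Rightarrow> 'g) \<Rightarrow> 'a list \<Rightarrow> ('a + 'g) list" where
  "fgrave G L f w = (if w = [] \<or> w \<in> L then map Inl w
     else map Inl (hd (sc L w)) @ [Inr (gprod G (map f (tl (sc L w))))])"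

fun gmerge :: "('g, 'b) monoid_scheme \<Rightarrow> ('a + 'g) list \<Rightarrow> ('a + 'g) list" where
  "gmerge G [] = []"
| "gmerge G (Inr a # Inr b # xs) = gmerge G (Inr (a \<otimes>\<^bsub>G\<^esub> b) # xs)"
| "gmerge G (x # xs) = x # gmerge G xs"

function hatruns :: "('a list \<Rightarrow> 'g) \<Rightarrow> ('a + 'g) list \<Rightarrow> ('a + 'g) list" where
  "hatruns h [] = []"
| "hatruns h (Inr g # xs) = Inr g # hatruns h xs"
| "hatruns h (Inl a # xs) =
     Inr (h (a # map projl (takeWhile isl xs))) # hatruns h (dropWhile isl xs)"
  by pat_completeness auto
termination
  by (relation "measure (\<lambda>(h, xs). length xs)") (auto simp: le_imp_less_Suc length_dropWhile_le)

text \<open>Extension of check-f to X^+: for w = u_0 g_1 u_1 ... g_n u_n,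
  grave(u_0) g_1 hat(u_1) ... g_n acute(u_n) with consecutive group elements multiplied.\<close>
definition fcheck :: "('g, 'b) monoid_scheme \<Rightarrow> 'a list set \<Rightarrow> ('a list \<Rightarrow> 'g) \<Rightarrow> ('a + 'g) list \<Rightarrow> ('a + 'g) list" where
  "fcheck G L f w =
    (if list_all isl w then fcheckA G L f (map projl w)
     else (let u0 = takeWhile isl w;
               un = rev (takeWhile isl (rev w));
               mid = drop (length u0) (take (length w - length un) w)
           in gmerge G (fgrave G L f (map projl u0) @ hatruns (fhat G L f) mid
                        @ facute G L f (map projl un))))"

end

theory Submission
  imports Defs
begin

text \<open>The occurrences of elements of ddot L in a word v can be enumerated from the left: if
  the prefix v[0,q-1] lies in L but v[0,q] does not, then exactly one occurrence v[p,q] ends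
  at q, and every other occurrence starts after p. Hence
  sc L v = v[0,q-1] # v[p,q] # sc L v[p+1,..], and induction on this recursion shows that
  concatenation only creates new occurrences inside the junction word w_m z_0:
  sc L (w z) = butlast (sc L w) @ sc L (w_m z_0) @ tl (sc L z), proved as its two one-sided
  halves. Multiplying out in G gives (a), and (b) is the same bookkeeping for the word of
  A-blocks and merged group letters.\<close>

lemma discrete_ivt: "P 0 \<Longrightarrow> \<not> P n \<Longrightarrow> \<exists>k<n. P k \<and> \<not> P (Suc k)"
proof (induction n)
  case (Suc n)
  then show ?case
    by (cases "P n") (auto intro: less_SucI)
qed simp

lemma set_tl_subset: "set (tl xs) \<subseteq> set xs"
  by (cases xs) auto

lemma set_butlast_subset: "set (butlast xs) \<subseteq> set xs"
  by (auto dest: in_set_butlastD)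

lemma hd_butlast: "butlast xs \<noteq> [] \<Longrightarrow> hd (butlast xs) = hd xs"
  by (cases xs) auto

section \<open>Factors of words\<close>

lemma fac_nonempty: "p \<le> q \<Longrightarrow> q < length v \<Longrightarrow> fac v p q \<noteq> []"
  by (simp add: fac_def)

lemma fac_whole: "v \<noteq> [] \<Longrightarrow> fac v 0 (length v - 1) = v"
  by (simp add: fac_def)

lemma fac_singleton: "p < length v \<Longrightarrow> fac v p p = [v ! p]"
  by (simp add: fac_def take_Suc_conv_app_nth)

lemma take_conv_fac: "0 < q \<Longrightarrow> q \<le> length v \<Longrightarrow> take q v = fac v 0 (q - 1)"
  by (simp add: fac_def)

lemma butlast_fac: "p < q \<Longrightarrow> q < length v \<Longrightarrow> butlast (fac v p q) = fac v p (q - 1)"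
  by (simp add: fac_def butlast_take)

lemma tl_fac: "p < q \<Longrightarrow> q < length v \<Longrightarrow> tl (fac v p q) = fac v (Suc p) q"
  by (simp add: fac_def tl_take drop_Suc tl_drop)

lemma fac_fac: "a \<le> c \<Longrightarrow> c \<le> d \<Longrightarrow> d \<le> b \<Longrightarrow> b < length v \<Longrightarrow>
   fac v c d = take (Suc d - c) (drop (c - a) (fac v a b))"
  by (simp add: fac_def drop_take min_def)

lemma fac_drop: "fac (drop k v) p q = fac v (p + k) (q + k)"
  by (simp add: fac_def add.commute)

lemma fac_append_left: "q < length x \<Longrightarrow> fac (x @ y) p q = fac x p q"
  by (simp add: fac_def)

lemma fac_append_right:
  "length u \<le> p \<Longrightarrow> p \<le> q \<Longrightarrow> fac (u @ y) p q = fac y (p - length u) (q - length u)"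
  by (simp add: fac_def)

lemma factorial_lang_take_drop:
  assumes "factorial_lang L" "u \<in> L" "take n (drop m u) \<noteq> []"
  shows "take n (drop m u) \<in> L"
proof -
  have "u = take m u @ take n (drop m u) @ drop n (drop m u)"
    by (metis append_take_drop_id)
  then show ?thesis
    using assms unfolding factorial_lang_def by blast
qed

lemma factorial_lang_fac_fac:
  assumes "factorial_lang L" "fac v a b \<in> L" "a \<le> c" "c \<le> d" "d \<le> b" "b < length v"
  shows "fac v c d \<in> L"
  using factorial_lang_take_drop[OF assms(1,2), of "Suc d - c" "c - a"] fac_fac[OF assms(3-6)]
    fac_nonempty[of c d v] assms
  by auto

lemma factorial_lang_fac:
  assumes "factorial_lang L" "v \<in> L" "c \<le> d" "d < length v"
  shows "fac v c d \<in> L"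
  using factorial_lang_fac_fac[OF assms(1), of v 0 "length v - 1" c d] assms fac_whole[of v]
  by (cases "v = []") auto

lemma factorial_lang_append:
  assumes "factorial_lang L" "w @ z \<in> L" "w \<noteq> []" "z \<noteq> []"
  shows "w \<in> L" "z \<in> L"
proof -
  have "w @ z = [] @ w @ z" "w @ z = w @ z @ []" by simp_all
  then show "w \<in> L" "z \<in> L"
    using assms unfolding factorial_lang_def by metis+
qed

section \<open>Occurrences of minimal forbidden factors\<close>

definition occ_set :: "'a list set \<Rightarrow> 'a list \<Rightarrow> (nat \<times> nat) set" where
  "occ_set L v = {(p, q). p \<le> q \<and> q < length v \<and> fac v p q \<in> ddot L}"

lemma occs_conv_occ_set: "occs L v = sorted_list_of_set (occ_set L v)"
  by (simp add: occs_def occ_set_def)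

lemma finite_occ_set: "finite (occ_set L v)"
proof -
  have "occ_set L v \<subseteq> {..<length v} \<times> {..<length v}"
    unfolding occ_set_def by auto
  then show ?thesis
    using finite_subset by blast
qed

definition shift_occ :: "nat \<Rightarrow> nat \<times> nat \<Rightarrow> nat \<times> nat" where
  "shift_occ k = (\<lambda>(p, q). (p + k, q + k))"

lemma occ_set_drop: "x \<in> occ_set L (drop k v) \<longleftrightarrow> shift_occ k x \<in> occ_set L v"
  by (cases x) (auto simp: occ_set_def shift_occ_def fac_drop)

lemma occ_set_append_left: "(p, q) \<in> occ_set L x \<Longrightarrow> (p, q) \<in> occ_set L (x @ y)"
  by (auto simp: occ_set_def fac_append_left)

lemma occ_set_append_right:
  "(p, q) \<in> occ_set L z \<Longrightarrow> (p + length u, q + length u) \<in> occ_set L (u @ z)"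
  by (auto simp: occ_set_def fac_append_right)

text \<open>An occurrence (p, q) whose prefix v[0, q-1] lies in L is the leftmost one.\<close>
definition first_occ :: "'a list set \<Rightarrow> 'a list \<Rightarrow> nat \<Rightarrow> nat \<Rightarrow> bool" where
  "first_occ L v p q \<longleftrightarrow> (p, q) \<in> occ_set L v \<and> take q v \<in> L"

locale factorial_language =
  fixes L :: "'a list set"
  assumes factorial: "factorial_lang L"
    and singleton_in: "[a] \<in> L"
    and Nil_notin: "[] \<notin> L"
begin

lemma occ_set_empty: "v \<in> L \<Longrightarrow> occ_set L v = {}"
  unfolding occ_set_def ddot_def using factorial_lang_fac[OF factorial] by fastforce

lemma occ_set_less: "(p, q) \<in> occ_set L v \<Longrightarrow> p < q"
  using fac_singleton[of p v] singleton_in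
  by (cases "p = q") (auto simp: occ_set_def ddot_def)

lemma first_occ_exists:
  assumes "v \<noteq> []" "v \<notin> L"
  shows "\<exists>p q. first_occ L v p q"
proof -
  (* q is where the prefixes of v leave L; p is where the factors ending at q, grown to the
     left, leave L. *)
  have "\<exists>k<length v - 1. take (Suc k) v \<in> L \<and> take (Suc (Suc k)) v \<notin> L"
    by (rule discrete_ivt[where P = "\<lambda>k. take (Suc k) v \<in> L"]) (use assms singleton_in in
        \<open>cases v; auto\<close>)+
  then obtain k where "k < length v - 1" "take (Suc k) v \<in> L" "take (Suc (Suc k)) v \<notin> L"
    by blast
  then obtain q where q: "q < length v" "take q v \<in> L" "take (Suc q) v \<notin> L" "0 < q"
    by (intro that[of "Suc k"]) auto
  have "\<exists>k<q. fac v (q - k) q \<in> L \<and> fac v (q - Suc k) q \<notin> L"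
    by (rule discrete_ivt[where P = "\<lambda>k. fac v (q - k) q \<in> L"])
      (use q singleton_in fac_singleton[of q v] in \<open>auto simp: fac_def\<close>)
  then obtain k where k: "k < q" "fac v (q - k) q \<in> L" "fac v (q - Suc k) q \<notin> L"
    by blast
  define p where "p = q - Suc k"
  have pq: "p < q" "Suc p = q - k"
    using k p_def by auto
  have "fac v 0 (q - 1) \<in> L"
    using q take_conv_fac[of q v] by auto
  then have "butlast (fac v p q) \<in> L"
    using factorial_lang_fac_fac[OF factorial, of v 0 "q - 1" p "q - 1"] butlast_fac[of p q v] pq q
    by auto
  moreover have "tl (fac v p q) \<in> L"
    using tl_fac[of p q v] pq q k by auto
  ultimately have "fac v p q \<in> ddot L"
    unfolding ddot_def using k pq q fac_nonempty[of p q v] p_def by auto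
  then show ?thesis
    using q pq unfolding first_occ_def occ_set_def by (blast intro: less_imp_le)
qed

lemma first_occ_precedes:
  assumes first: "first_occ L v p q" and occ: "(p', q') \<in> occ_set L v"
    and ne: "(p', q') \<noteq> (p, q)"
  shows "p < p'"
proof (rule ccontr)
  assume "\<not> p < p'"
  then have le: "p' \<le> p" by simp
  have pq: "(p, q) \<in> occ_set L v" "take q v \<in> L"
    using first unfolding first_occ_def by auto
  have lt: "p < q" "p' < q'"
    using occ_set_less pq occ by auto
  have A: "q < length v" "fac v p q \<notin> L" "q' < length v" "fac v p' q' \<notin> L"
    "butlast (fac v p' q') \<in> L" "tl (fac v p' q') \<in> L"
    using pq occ unfolding occ_set_def ddot_def by auto
  consider "q' < q" | "q' = q" | "q < q'" by linarith
  then show False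
  proof cases
    case 1
    have "fac v 0 (q - 1) \<in> L"
      using pq take_conv_fac[of q v] lt A by auto
    moreover have "q' \<le> q - 1" "q - 1 < length v"
      using 1 A by auto
    ultimately have "fac v p' q' \<in> L"
      using factorial_lang_fac_fac[OF factorial, of v 0 "q - 1" p' q'] lt by auto
    then show False using A by auto
  next
    case 2
    then have "fac v (Suc p') q \<in> L"
      using A tl_fac[of p' q' v] lt by auto
    then have "fac v p q \<in> L"
      using factorial_lang_fac_fac[OF factorial, of v "Suc p'" q p q] 2 A le ne lt by auto
    then show False using A by auto
  next
    case 3
    have "fac v p' (q' - 1) \<in> L"
      using A butlast_fac[of p' q' v] lt by auto
    moreover have "q \<le> q' - 1" "q' - 1 < length v"
      using 3 A by auto
    ultimately have "fac v p q \<in> L"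
      using factorial_lang_fac_fac[OF factorial, of v p' "q' - 1" p q] le lt by auto
    then show False using A by auto
  qed
qed

lemma occ_set_first_occ:
  assumes "first_occ L v p q"
  shows "occ_set L v = insert (p, q) (shift_occ (Suc p) ` occ_set L (drop (Suc p) v))"
proof
  show "occ_set L v \<subseteq> insert (p, q) (shift_occ (Suc p) ` occ_set L (drop (Suc p) v))"
  proof
    fix x
    assume x: "x \<in> occ_set L v"
    obtain p' q' where x': "x = (p', q')" by (cases x)
    show "x \<in> insert (p, q) (shift_occ (Suc p) ` occ_set L (drop (Suc p) v))"
    proof (cases "x = (p, q)")
      case False
      then have "p < p'" "p' \<le> q'"
        using first_occ_precedes[OF assms] x x' unfolding occ_set_def by auto
      then have "x = shift_occ (Suc p) (p' - Suc p, q' - Suc p)"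
        using x' by (auto simp: shift_occ_def)
      moreover have "(p' - Suc p, q' - Suc p) \<in> occ_set L (drop (Suc p) v)"
        using occ_set_drop x calculation by metis
      ultimately show ?thesis by blast
    qed simp
  qed
  show "insert (p, q) (shift_occ (Suc p) ` occ_set L (drop (Suc p) v)) \<subseteq> occ_set L v"
    using assms occ_set_drop unfolding first_occ_def by blast
qed

lemma occs_first_occ:
  assumes "first_occ L v p q"
  shows "occs L v = (p, q) # map (shift_occ (Suc p)) (occs L (drop (Suc p) v))"
proof -
  let ?xs = "occs L (drop (Suc p) v)"
  have xs: "sorted_wrt (<) ?xs" "set ?xs = occ_set L (drop (Suc p) v)"
    by (simp_all add: occs_conv_occ_set finite_occ_set)
  have "shift_occ (Suc p) x < shift_occ (Suc p) y" if "x < y" for x y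
    using that by (auto simp: shift_occ_def less_prod_def split: prod.splits)
  then have "sorted_wrt (<) (map (shift_occ (Suc p)) ?xs)"
    unfolding sorted_wrt_map by (rule sorted_wrt_mono_rel[OF _ xs(1)])
  moreover have "\<forall>y \<in> set (map (shift_occ (Suc p)) ?xs). (p, q) < y"
    by (auto simp: shift_occ_def less_prod_def)
  ultimately have "sorted_wrt (<) ((p, q) # map (shift_occ (Suc p)) ?xs)"
    by simp
  moreover have "set ((p, q) # map (shift_occ (Suc p)) ?xs) = occ_set L v"
    using occ_set_first_occ[OF assms] xs by simp
  ultimately show ?thesis
    by (metis strict_sorted_equal occs_conv_occ_set finite_occ_set strict_sorted_list_of_set
        set_sorted_list_of_set)
qed

lemma sc_in_L: "v \<in> L \<Longrightarrow> sc L v = [v]"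
  by (simp add: sc_def lcoords_def ddcoords_def occs_conv_occ_set occ_set_empty)

lemma map2_take_drop_shift:
  "map2 (\<lambda>s e. take (e - s) (drop s v)) (map (\<lambda>x. x + k) xs) (map (\<lambda>x. x + k) ys)
   = map2 (\<lambda>s e. take (e - s) (drop s (drop k v))) xs ys"
  by (simp add: zip_map_map case_prod_beta add.commute)

lemma sc_first_occ:
  assumes "first_occ L v p q"
  shows "sc L v = take q v # fac v p q # sc L (drop (Suc p) v)"
proof -
  let ?u = "drop (Suc p) v" and ?F = "\<lambda>s e. take (e - s) (drop s v)"
  let ?os = "occs L ?u"
  have occs: "occs L v = (p, q) # map (shift_occ (Suc p)) ?os"
    by (rule occs_first_occ[OF assms])
  have occ: "(p, q) \<in> occ_set L v"
    using assms by (simp add: first_occ_def)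
  have "p < q" "q < length v"
    using occ_set_less[OF occ] occ by (auto simp: occ_set_def)
  then have ends: "map snd (map (shift_occ (Suc p)) ?os) @ [length v]
      = map (\<lambda>x. x + Suc p) (map snd ?os @ [length ?u])"
    by (auto simp: shift_occ_def)
  have starts: "Suc p # map (\<lambda>(p, q). Suc p) (map (shift_occ (Suc p)) ?os)
      = map (\<lambda>x. x + Suc p) (0 # map (\<lambda>(p, q). Suc p) ?os)"
    by (auto simp: shift_occ_def)
  have "lcoords L v = take q v # map2 ?F (Suc p # map (\<lambda>(p, q). Suc p) (map (shift_occ (Suc p)) ?os))
      (map snd (map (shift_occ (Suc p)) ?os) @ [length v])"
    unfolding lcoords_def Let_def occs by simp
  also note starts
  also note ends
  also note map2_take_drop_shift
  finally have lc: "lcoords L v = take q v # lcoords L ?u"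
    by (simp add: lcoords_def Let_def)
  have dd: "ddcoords L v = fac v p q # ddcoords L ?u"
    unfolding ddcoords_def occs by (auto simp: shift_occ_def fac_drop)
  have "lcoords L ?u \<noteq> []"
    by (simp add: lcoords_def Let_def)
  then show ?thesis
    unfolding sc_def lc dd by (cases "lcoords L ?u") auto
qed

lemma sc_cases:
  assumes "v \<noteq> []"
  obtains "v \<in> L" "sc L v = [v]"
  | p q where "v \<notin> L" "first_occ L v p q" "p < q" "q < length v" "fac v p q \<in> ddot L"
      "sc L v = take q v # fac v p q # sc L (drop (Suc p) v)"
proof (cases "v \<in> L")
  case True
  then show ?thesis using that sc_in_L by auto
next
  case False
  then obtain p q where first: "first_occ L v p q"
    using first_occ_exists[OF assms] by blast
  then have occ: "(p, q) \<in> occ_set L v"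
    by (simp add: first_occ_def)
  then have "p < q" "q < length v" "fac v p q \<in> ddot L"
    using occ_set_less[OF occ] by (auto simp: occ_set_def)
  then show ?thesis
    using that(2)[OF False first _ _ _ sc_first_occ[OF first]] by blast
qed

lemma sc_nonempty: "sc L v \<noteq> []"
  by (simp add: sc_def)

lemma sc_coordinates:
  "v \<noteq> [] \<Longrightarrow> set (sc L v) \<subseteq> L \<union> ddot L \<and> hd (sc L v) \<in> L \<and> last (sc L v) \<in> L"
proof (induction "length v" arbitrary: v rule: less_induct)
  case less
  show ?case
  proof (cases rule: sc_cases[OF less.prems])
    case (2 p q)
    then have "drop (Suc p) v \<noteq> []" "length (drop (Suc p) v) < length v"
      by auto
    then have "set (sc L (drop (Suc p) v)) \<subseteq> L \<union> ddot L \<and> last (sc L (drop (Suc p) v)) \<in> L"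
      using less by blast
    then show ?thesis
      using 2 sc_nonempty[of "drop (Suc p) v"] unfolding first_occ_def by auto
  qed simp
qed

lemma hd_sc_in_L: "v \<noteq> [] \<Longrightarrow> hd (sc L v) \<in> L"
  and last_sc_in_L: "v \<noteq> [] \<Longrightarrow> last (sc L v) \<in> L"
  and set_sc_subset: "v \<noteq> [] \<Longrightarrow> set (sc L v) \<subseteq> L \<union> ddot L"
  using sc_coordinates by blast+

lemma sc_not_in_L:
  assumes "v \<noteq> []" "v \<notin> L"
  shows "tl (sc L v) \<noteq> []" "butlast (sc L v) \<noteq> []"
  using assms by (cases rule: sc_cases[OF assms(1)]; simp add: sc_nonempty)+

lemma occ_set_append_in_L:
  assumes "x \<in> L" "(p, q) \<in> occ_set L (u @ x)"
  shows "p < length u"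
proof (rule ccontr)
  assume "\<not> p < length u"
  with assms(2) have "fac (u @ x) p q = fac x (p - length u) (q - length u)"
    "p - length u \<le> q - length u" "q - length u < length x"
    by (auto simp: occ_set_def fac_append_right)
  then show False
    using factorial_lang_fac[OF factorial assms(1)] assms(2) by (auto simp: occ_set_def ddot_def)
qed

lemma first_occ_append:
  assumes "first_occ L x p q"
  shows "first_occ L (x @ y) p q"
proof -
  have "q < length x"
    using assms by (simp add: first_occ_def occ_set_def)
  then show ?thesis
    using assms occ_set_append_left[of p q L x y] by (simp add: first_occ_def)
qed

lemma sc_append_first_occ:
  assumes "first_occ L x p q"
  shows "sc L (x @ y) = take q x # fac x p q # sc L (drop (Suc p) x @ y)"
proof -
  have occ: "(p, q) \<in> occ_set L x"
    using assms by (simp add: first_occ_def)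
  then have "Suc p \<le> length x" "q < length x"
    using occ_set_less[OF occ] by (auto simp: occ_set_def)
  then show ?thesis
    using sc_first_occ[OF first_occ_append[OF assms]] by (simp add: fac_append_left)
qed

lemma sc_append_hd:
  assumes "z \<noteq> []"
  shows "sc L (u @ z) = sc L (u @ hd (sc L z)) @ tl (sc L z)"
proof (cases "z \<in> L")
  case True
  then show ?thesis by (simp add: sc_in_L)
next
  case False
  then obtain p q where first: "first_occ L z p q" and "p < q" "q < length z"
    and sc_z: "sc L z = take q z # fac z p q # sc L (drop (Suc p) z)"
    by (cases rule: sc_cases[OF assms]) auto
  define z0 where "z0 = take q z"
  have z0: "hd (sc L z) = z0" "z0 \<noteq> []" "z0 \<in> L" "z = z0 @ drop q z"
    using sc_z first \<open>p < q\<close> \<open>q < length z\<close> by (auto simp: z0_def first_occ_def)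
  show ?thesis
  proof (induction "length u" arbitrary: u rule: less_induct)
    case less
    show ?case
    proof (cases "u @ z0 \<in> L")
      case True
      have "first_occ L (u @ z) (p + length u) (q + length u)"
        using first True occ_set_append_right unfolding first_occ_def z0_def by auto
      then show ?thesis
        using sc_first_occ sc_z True sc_in_L z0 \<open>p < q\<close> by (simp add: fac_append_right z0_def)
    next
      case False
      have "u @ z0 \<noteq> []"
        using z0(2) by simp
      then obtain p' q' where first': "first_occ L (u @ z0) p' q'"
        and sc_uz0: "sc L (u @ z0) = take q' (u @ z0) # fac (u @ z0) p' q'
            # sc L (drop (Suc p') (u @ z0))"
        using False by (cases rule: sc_cases) simp_all
      have "p' < length u"
        using first' occ_set_append_in_L[OF z0(3)] unfolding first_occ_def by blast
      have "sc L (u @ z) = sc L ((u @ z0) @ drop q z)"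
        using z0(4) by simp
      also have "\<dots> = take q' (u @ z0) # fac (u @ z0) p' q' # sc L (drop (Suc p') u @ z)"
        using sc_append_first_occ[OF first', of "drop q z"] \<open>p' < length u\<close>
        by (simp add: z0(4)[symmetric])
      also have "sc L (drop (Suc p') u @ z) = sc L (drop (Suc p') u @ z0) @ tl (sc L z)"
        using less \<open>p' < length u\<close> z0(1) by simp
      finally show ?thesis
        using sc_uz0 z0(1) \<open>p' < length u\<close> by simp
    qed
  qed
qed

lemma sc_append_last:
  "w \<noteq> [] \<Longrightarrow> sc L (w @ u) = butlast (sc L w) @ sc L (last (sc L w) @ u)"
proof (induction "length w" arbitrary: w rule: less_induct)
  case less
  show ?case
  proof (cases rule: sc_cases[OF less.prems])
    case (2 p q)
    let ?w = "drop (Suc p) w"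
    have "sc L (w @ u) = take q w # fac w p q # sc L (?w @ u)"
      using sc_append_first_occ 2 by simp
    also have "sc L (?w @ u) = butlast (sc L ?w) @ sc L (last (sc L ?w) @ u)"
      using less 2 by simp
    finally show ?thesis
      using 2 sc_nonempty[of ?w] by simp
  qed simp
qed

end

lemma gprod_Nil [simp]: "gprod G [] = \<one>\<^bsub>G\<^esub>"
  and gprod_Cons [simp]: "gprod G (x # xs) = x \<otimes>\<^bsub>G\<^esub> gprod G xs"
  by (simp_all add: gprod_def)

context group
begin

lemma gprod_closed: "set xs \<subseteq> carrier G \<Longrightarrow> gprod G xs \<in> carrier G"
  by (induction xs) auto

lemma gprod_append:
  "set xs \<subseteq> carrier G \<Longrightarrow> set ys \<subseteq> carrier G \<Longrightarrow> gprod G (xs @ ys) = gprod G xs \<otimes> gprod G ys"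
  by (induction xs) (auto simp: m_assoc gprod_closed)

end

section \<open>Words with group letters\<close>

lemma takeWhile_isl_Inl_Inr: "takeWhile isl (map Inl a @ Inr g # ys) = map Inl a"
  by (induction a) auto

lemma dropWhile_isl_Inl_Inr: "dropWhile isl (map Inl a @ Inr g # ys) = Inr g # ys"
  by (induction a) auto

lemma projl_comp_Inl [simp]: "projl \<circ> Inl = id"
  by auto

lemma not_list_all_isl_Inr: "\<not> list_all isl (map Inl a @ Inr g # ys)"
  by (induction a) auto

lemma rev_takeWhile_isl_rev: "rev (takeWhile isl (rev (ys @ Inr g # map Inl b))) = map Inl b"
proof -
  have "rev (ys @ Inr g # map Inl b) = map Inl (rev b) @ Inr g # rev ys"
    by (simp add: rev_map)
  then show ?thesis
    by (simp add: takeWhile_isl_Inl_Inr rev_map)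
qed

lemma gmerge_Inl_append: "gmerge G (map Inl a @ xs) = map Inl a @ gmerge G xs"
  by (induction a) auto

lemma gmerge_Inr_Inl: "gmerge G (Inr g # map Inl b) = Inr g # map Inl b"
  using gmerge_Inl_append[of G b "[]"] by (cases b) auto

lemma hatruns_block: "c \<noteq> [] \<Longrightarrow> hatruns h (map Inl c @ [Inr g]) = [Inr (h c), Inr g]"
  using takeWhile_isl_Inl_Inr[of "tl c" g "[]"] dropWhile_isl_Inl_Inr[of "tl c" g "[]"]
  by (cases c) simp_all

lemma fcheck_Inl: "fcheck G L f (map Inl v) = fcheckA G L f v"
  by (simp add: fcheck_def list_all_iff)

lemma fcheck_one_group_letter:
  "fcheck G L f (map Inl a @ Inr g # map Inl b) = gmerge G (fgrave G L f a @ Inr g # facute G L f b)"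
proof -
  let ?x = "map Inl a @ Inr g # map Inl b"
  have mid: "drop (length (map Inl a :: ('a + 'g) list))
      (take (length ?x - length (map Inl b :: ('a + 'g) list)) ?x) = [Inr g]"
    by simp
  show ?thesis
    unfolding fcheck_def using not_list_all_isl_Inr[of a g "map Inl b"]
    by (simp only: Let_def takeWhile_isl_Inl_Inr rev_takeWhile_isl_rev mid if_False map_map projl_comp_Inl list.map_id)
      simp
qed

lemma fcheck_two_group_letters:
  assumes "c \<noteq> []"
  shows "fcheck G L f (map Inl a @ Inr g # map Inl c @ Inr h # map Inl b)
    = gmerge G (fgrave G L f a @ Inr g # Inr (fhat G L f c) # Inr h # facute G L f b)"
proof -
  let ?x = "map Inl a @ Inr g # map Inl c @ Inr h # map Inl b"
  have mid: "drop (length (map Inl a :: ('a + 'g) list))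
      (take (length ?x - length (map Inl b :: ('a + 'g) list)) ?x) = Inr g # map Inl c @ [Inr h]"
    by simp
  have "rev (takeWhile isl (rev ?x)) = map Inl b"
    using rev_takeWhile_isl_rev[of "map Inl a @ Inr g # map Inl c" h b] by simp
  then show ?thesis
    unfolding fcheck_def using not_list_all_isl_Inr[of a g "map Inl c @ Inr h # map Inl b"] assms
    by (simp only: Let_def takeWhile_isl_Inl_Inr mid if_False map_map projl_comp_Inl list.map_id)
      (simp add: hatruns_block)
qed

section \<open>The maps hat-f and check-f\<close>

locale coordinate_map = factorial_language L + group G
  for L :: "'a list set" and G :: "('g, 'b) monoid_scheme" (structure) +
  fixes f :: "'a list \<Rightarrow> 'g"
  assumes f_closed: "v \<in> L \<union> ddot L \<Longrightarrow> f v \<in> carrier G"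
begin

lemma f_sc_closed: "v \<noteq> [] \<Longrightarrow> set ys \<subseteq> set (sc L v) \<Longrightarrow> set (map f ys) \<subseteq> carrier G"
  using set_sc_subset f_closed by fastforce

lemma fhat_eq_gprod_sc: "v \<noteq> [] \<Longrightarrow> fhat G L f v = gprod G (map f (sc L v))"
  using f_closed by (cases "v \<in> L") (simp_all add: fhat_def sc_in_L)

lemma fhat_append_hd:
  assumes "w \<noteq> []" "z \<noteq> []"
  shows "fhat G L f (w @ z) = fhat G L f (w @ hd (sc L z)) \<otimes> inv (f (hd (sc L z))) \<otimes> fhat G L f z"
proof -
  let ?z0 = "hd (sc L z)" and ?t = "gprod G (map f (tl (sc L z)))"
  let ?x = "fhat G L f (w @ ?z0)"
  have sc_z: "sc L z = ?z0 # tl (sc L z)"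
    using sc_nonempty by simp
  have closed: "set (map f (sc L (w @ ?z0))) \<subseteq> carrier G" "set (map f (tl (sc L z))) \<subseteq> carrier G"
    "f ?z0 \<in> carrier G"
    using f_sc_closed[of "w @ ?z0"] f_sc_closed[OF assms(2) set_tl_subset] hd_sc_in_L[OF assms(2)]
      f_closed assms(1) by auto
  then have "?x \<in> carrier G" "?t \<in> carrier G"
    using fhat_eq_gprod_sc assms(1) gprod_closed by auto
  have "fhat G L f (w @ z) = ?x \<otimes> ?t"
    using fhat_eq_gprod_sc assms closed sc_append_hd[OF assms(2), of w] by (simp add: gprod_append)
  moreover have "fhat G L f z = f ?z0 \<otimes> ?t"
    using fhat_eq_gprod_sc[OF assms(2)] sc_z by (metis gprod_Cons list.simps(9))
  moreover have "inv (f ?z0) \<otimes> (f ?z0 \<otimes> ?t) = ?t"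
    using closed \<open>?t \<in> carrier G\<close> by (simp add: m_assoc[symmetric])
  ultimately show ?thesis
    using closed \<open>?x \<in> carrier G\<close> \<open>?t \<in> carrier G\<close> by (simp add: m_assoc)
qed

lemma fhat_append_last:
  assumes "w \<noteq> []" "z \<noteq> []"
  shows "fhat G L f (w @ z) = fhat G L f w \<otimes> inv (f (last (sc L w))) \<otimes> fhat G L f (last (sc L w) @ z)"
proof -
  let ?wm = "last (sc L w)" and ?b = "gprod G (map f (butlast (sc L w)))"
  let ?y = "fhat G L f (?wm @ z)"
  have closed: "set (map f (butlast (sc L w))) \<subseteq> carrier G" "f ?wm \<in> carrier G"
    "set (map f (sc L (?wm @ z))) \<subseteq> carrier G"
    using f_sc_closed[OF assms(1) set_butlast_subset] f_sc_closed[of "?wm @ z"]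
      last_sc_in_L[OF assms(1)] f_closed assms(2) by auto
  then have "?y \<in> carrier G" "?b \<in> carrier G"
    using fhat_eq_gprod_sc assms(2) gprod_closed by auto
  have "fhat G L f (w @ z) = ?b \<otimes> ?y"
    using fhat_eq_gprod_sc assms closed sc_append_last[OF assms(1), of z] by (simp add: gprod_append)
  moreover have "fhat G L f w = ?b \<otimes> f ?wm"
  proof -
    have "map f (sc L w) = map f (butlast (sc L w) @ [?wm])"
      unfolding append_butlast_last_id[OF sc_nonempty] ..
    then show ?thesis
      using fhat_eq_gprod_sc[OF assms(1)] closed gprod_append[of _ "[f ?wm]"] by simp
  qed
  moreover have "f ?wm \<otimes> (inv (f ?wm) \<otimes> ?y) = ?y"
    using closed \<open>?y \<in> carrier G\<close> by (simp add: m_assoc[symmetric])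
  ultimately show ?thesis
    using closed \<open>?y \<in> carrier G\<close> \<open>?b \<in> carrier G\<close> by (simp add: m_assoc)
qed

lemma fcheckA_in_L: "v \<in> L \<Longrightarrow> fcheckA G L f v = map Inl v"
  by (simp add: fcheckA_def)

lemma fcheckA_not_in_L:
  "v \<noteq> [] \<Longrightarrow> v \<notin> L \<Longrightarrow> fcheckA G L f v
    = map Inl (hd (sc L v)) @ Inr (gprod G (map f (butlast (tl (sc L v))))) # map Inl (last (sc L v))"
  by (simp add: fcheckA_def)

lemma gmerge_fgrave:
  assumes "x \<noteq> []" "g \<in> carrier G"
  shows "gmerge G (fgrave G L f x @ Inr g # map Inl b)
    = map Inl (hd (sc L x)) @ Inr (gprod G (map f (tl (sc L x))) \<otimes> g) # map Inl b"
  using assms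
  by (cases "x \<in> L") (simp_all add: fgrave_def sc_in_L gmerge_Inl_append gmerge_Inr_Inl)

lemma gmerge_facute:
  assumes "x \<noteq> []" "g \<in> carrier G"
  shows "gmerge G (Inr g # facute G L f x)
    = Inr (g \<otimes> gprod G (map f (butlast (sc L x)))) # map Inl (last (sc L x))"
  using assms
  by (cases "x \<in> L") (simp_all add: facute_def sc_in_L gmerge_Inl_append gmerge_Inr_Inl)

lemma fcheckA_append_in_L_in_L:
  assumes "w \<in> L" "z \<in> L"
  shows "fcheckA G L f (w @ z) = fcheck G L f (fcheckA G L f w @ fcheckA G L f z)"
  using fcheck_Inl[of G L f "w @ z"] assms by (simp add: fcheckA_in_L)

lemma fcheckA_append_in_L_not_in_L:
  assumes "w \<in> L" "z \<noteq> []" "z \<notin> L"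
  shows "fcheckA G L f (w @ z) = fcheck G L f (fcheckA G L f w @ fcheckA G L f z)"
proof -
  let ?z0 = "hd (sc L z)" and ?zm = "last (sc L z)" and ?h = "gprod G (map f (butlast (tl (sc L z))))"
  let ?s = "sc L (w @ ?z0)"
  have "w \<noteq> []"
    using assms(1) Nil_notin by auto
  have closed: "set (map f (tl ?s)) \<subseteq> carrier G" "set (map f (butlast (tl (sc L z)))) \<subseteq> carrier G"
    using f_sc_closed[OF _ set_tl_subset, of "w @ ?z0"] \<open>w \<noteq> []\<close>
      f_sc_closed[OF assms(2) subset_trans[OF set_butlast_subset set_tl_subset]] by auto
  have word: "fcheckA G L f w @ fcheckA G L f z = map Inl (w @ ?z0) @ Inr ?h # map Inl ?zm"
    using assms by (simp add: fcheckA_in_L fcheckA_not_in_L)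
  have "fcheck G L f (fcheckA G L f w @ fcheckA G L f z)
      = gmerge G (fgrave G L f (w @ ?z0) @ Inr ?h # map Inl ?zm)"
    unfolding word fcheck_one_group_letter using last_sc_in_L[OF assms(2)] by (simp add: facute_def)
  also have "\<dots> = map Inl (hd ?s) @ Inr (gprod G (map f (tl ?s)) \<otimes> ?h) # map Inl ?zm"
    using gmerge_fgrave \<open>w \<noteq> []\<close> closed(2) gprod_closed by simp
  also have "\<dots> = fcheckA G L f (w @ z)"
  proof -
    have "w @ z \<notin> L"
      using factorial_lang_append(2)[OF factorial _ \<open>w \<noteq> []\<close> assms(2)] assms(3) by blast
    moreover have "sc L (w @ z) = ?s @ tl (sc L z)" "tl (sc L z) \<noteq> []"
      using sc_append_hd[OF assms(2)] sc_not_in_L[OF assms(2,3)] by auto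
    ultimately show ?thesis
      using \<open>w \<noteq> []\<close> closed sc_nonempty[of "w @ ?z0"]
      by (simp add: fcheckA_not_in_L butlast_append last_tl gprod_append)
  qed
  finally show ?thesis ..
qed

lemma fcheckA_append_not_in_L_in_L:
  assumes "w \<noteq> []" "w \<notin> L" "z \<in> L"
  shows "fcheckA G L f (w @ z) = fcheck G L f (fcheckA G L f w @ fcheckA G L f z)"
proof -
  let ?w0 = "hd (sc L w)" and ?wm = "last (sc L w)" and ?g = "gprod G (map f (butlast (tl (sc L w))))"
  let ?t = "sc L (?wm @ z)"
  have "z \<noteq> []"
    using assms(3) Nil_notin by auto
  have closed: "set (map f (butlast ?t)) \<subseteq> carrier G" "set (map f (butlast (tl (sc L w)))) \<subseteq> carrier G"
    using f_sc_closed[OF _ set_butlast_subset, of "?wm @ z"] \<open>z \<noteq> []\<close>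
      f_sc_closed[OF assms(1) subset_trans[OF set_butlast_subset set_tl_subset]] by auto
  have word: "fcheckA G L f w @ fcheckA G L f z = map Inl ?w0 @ Inr ?g # map Inl (?wm @ z)"
    using assms by (simp add: fcheckA_in_L fcheckA_not_in_L)
  have "fcheck G L f (fcheckA G L f w @ fcheckA G L f z)
      = map Inl ?w0 @ gmerge G (Inr ?g # facute G L f (?wm @ z))"
    unfolding word fcheck_one_group_letter using hd_sc_in_L[OF assms(1)]
    by (simp add: fgrave_def gmerge_Inl_append)
  also have "\<dots> = map Inl ?w0 @ Inr (?g \<otimes> gprod G (map f (butlast ?t))) # map Inl (last ?t)"
    using gmerge_facute \<open>z \<noteq> []\<close> closed(2) gprod_closed by simp
  also have "\<dots> = fcheckA G L f (w @ z)"
  proof -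
    have "w @ z \<notin> L"
      using factorial_lang_append(1)[OF factorial _ assms(1) \<open>z \<noteq> []\<close>] assms(2) by blast
    moreover have "sc L (w @ z) = butlast (sc L w) @ ?t" "butlast (sc L w) \<noteq> []"
      using sc_append_last[OF assms(1)] sc_not_in_L[OF assms(1,2)] by auto
    ultimately show ?thesis
      using assms(1) closed sc_nonempty[of "?wm @ z"] sc_nonempty[of w]
      by (simp add: fcheckA_not_in_L butlast_append butlast_tl gprod_append hd_butlast)
  qed
  finally show ?thesis ..
qed

lemma fcheckA_append_not_in_L_not_in_L:
  assumes "w \<noteq> []" "w \<notin> L" "z \<noteq> []" "z \<notin> L"
  shows "fcheckA G L f (w @ z) = fcheck G L f (fcheckA G L f w @ fcheckA G L f z)"
proof -
  let ?w0 = "hd (sc L w)" and ?wm = "last (sc L w)" and ?g = "gprod G (map f (butlast (tl (sc L w))))"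
  let ?z0 = "hd (sc L z)" and ?zm = "last (sc L z)" and ?h = "gprod G (map f (butlast (tl (sc L z))))"
  let ?m = "sc L (?wm @ ?z0)"
  have "?wm @ ?z0 \<noteq> []"
    using last_sc_in_L[OF assms(1)] Nil_notin by auto
  have closed: "set (map f (butlast (tl (sc L w)))) \<subseteq> carrier G" "set (map f ?m) \<subseteq> carrier G"
    "set (map f (butlast (tl (sc L z)))) \<subseteq> carrier G"
    using f_sc_closed[OF assms(1) subset_trans[OF set_butlast_subset set_tl_subset]]
      f_sc_closed[OF \<open>?wm @ ?z0 \<noteq> []\<close> subset_refl]
      f_sc_closed[OF assms(3) subset_trans[OF set_butlast_subset set_tl_subset]] by auto
  have word: "fcheckA G L f w @ fcheckA G L f z
      = map Inl ?w0 @ Inr ?g # map Inl (?wm @ ?z0) @ Inr ?h # map Inl ?zm"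
    using assms by (simp add: fcheckA_not_in_L)
  have "fcheck G L f (fcheckA G L f w @ fcheckA G L f z)
      = map Inl ?w0 @ Inr (?g \<otimes> fhat G L f (?wm @ ?z0) \<otimes> ?h) # map Inl ?zm"
    unfolding word fcheck_two_group_letters[OF \<open>?wm @ ?z0 \<noteq> []\<close>]
    using hd_sc_in_L[OF assms(1)] last_sc_in_L[OF assms(3)]
    by (simp add: fgrave_def facute_def gmerge_Inl_append gmerge_Inr_Inl)
  also have "\<dots> = fcheckA G L f (w @ z)"
  proof -
    have "w @ z \<notin> L"
      using factorial_lang_append(1)[OF factorial _ assms(1,3)] assms(2) by blast
    moreover have "sc L (w @ z) = butlast (sc L w) @ ?m @ tl (sc L z)"
      using sc_append_last[OF assms(1)] sc_append_hd[OF assms(3)] by simp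
    moreover have "butlast (sc L w) \<noteq> []" "tl (sc L z) \<noteq> []"
      using sc_not_in_L assms by auto
    ultimately show ?thesis
      using assms closed sc_nonempty[of "?wm @ ?z0"] sc_nonempty[of w]
        fhat_eq_gprod_sc[OF \<open>?wm @ ?z0 \<noteq> []\<close>] gprod_closed
      by (simp add: fcheckA_not_in_L butlast_append butlast_tl gprod_append hd_butlast last_tl m_assoc)
  qed
  finally show ?thesis ..
qed

lemma fcheckA_append:
  assumes "w \<noteq> []" "z \<noteq> []"
  shows "fcheckA G L f (w @ z) = fcheck G L f (fcheckA G L f w @ fcheckA G L f z)"
  using fcheckA_append_in_L_in_L fcheckA_append_in_L_not_in_L fcheckA_append_not_in_L_in_L
    fcheckA_append_not_in_L_not_in_L assms
  by (cases "w \<in> L"; cases "z \<in> L") auto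

end

theorem lemma1:
  fixes G :: "('g, 'b) monoid_scheme" and L :: "'a list set" and f :: "'a list \<Rightarrow> 'g"
    and w z :: "'a list"
  assumes "group G"
    and "L \<noteq> {}" and "[] \<notin> L" and "factorial_lang L"
    and "\<forall>a. [a] \<in> L"
    and "\<forall>v \<in> L \<union> ddot L. f v \<in> carrier G"
    and "w \<noteq> []" and "z \<noteq> []"
  shows "fhat G L f (w @ z) =
           fhat G L f (w @ hd (sc L z)) \<otimes>\<^bsub>G\<^esub> inv\<^bsub>G\<^esub> (f (hd (sc L z))) \<otimes>\<^bsub>G\<^esub> fhat G L f z
       \<and> fhat G L f (w @ z) =
           fhat G L f w \<otimes>\<^bsub>G\<^esub> inv\<^bsub>G\<^esub> (f (last (sc L w))) \<otimes>\<^bsub>G\<^esub> fhat G L f (last (sc L w) @ z)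
       \<and> fcheckA G L f (w @ z) = fcheck G L f (fcheckA G L f w @ fcheckA G L f z)"
proof -
  interpret coordinate_map L G f
    using assms
    by (intro coordinate_map.intro factorial_language.intro coordinate_map_axioms.intro) auto
  show ?thesis
    using fhat_append_hd fhat_append_last fcheckA_append assms(7,8) by blast
qed

end
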